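(* Let $n\in\mathbb N$, $\varphi_1\in C_0^{[n/2]+2}(\mathbb R^n)$, and $\psi(x,t)=\frac32\int_0^1 v_{\varphi_1}(x,3t^{1/3}s)(1-s^2)\,ds$ for $x\in\mathbb R^n$, $t>0$. Then \[ \psi_{tt}-t^{-4/3}\Delta\psi+2t^{-1}\psi_t=0\quad(t>0,\ x\in\mathbb R^n),\qquad \lim_{t\to0}t\psi(x,t)=0,\quad \lim_{t\to0}\big(t\psi_t(x,t)+\psi(x,t)\big)=\varphi_1(x). \]
   Context: $\Delta=\sum_{i=1}^n\partial_{x_i}^2$, $[n/2]$ is the integer part of $n/2$. For $\varphi=\varphi(x)$, $v_\varphi(x,r)$ denotes the solution $v$ of the free wave equation $v_{rr}-\Delta v=0$, $v(x,0)=\varphi(x)$, $v_r(x,0)=0$, evaluated at time $r$. *)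

theory Defs
  imports "HOL-Analysis.Analysis"
begin

fun Ck_on :: "nat \<Rightarrow> 'a::euclidean_space set \<Rightarrow> ('a \<Rightarrow> real) \<Rightarrow> bool" where
  "Ck_on 0 S f = continuous_on S f"
| "Ck_on (Suc k) S f =
     (continuous_on S f \<and> (\<forall>x\<in>S. f differentiable (at x)) \<and>
      (\<forall>b\<in>Basis. Ck_on k S (\<lambda>x. frechet_derivative f (at x) b)))"

definition partial :: "('a::real_normed_vector \<Rightarrow> real) \<Rightarrow> 'a \<Rightarrow> 'a \<Rightarrow> real" where
  "partial f b x = deriv (\<lambda>h. f (x + h *\<^sub>R b)) 0"

definition laplacian :: "(real^'n \<Rightarrow> real) \<Rightarrow> real^'n \<Rightarrow> real" where
  "laplacian f x = (\<Sum>i\<in>UNIV. partial (partial f (axis i 1)) (axis i 1) x)"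

definition wave_solution :: "(real^'n \<Rightarrow> real) \<Rightarrow> (real^'n \<Rightarrow> real \<Rightarrow> real) \<Rightarrow> bool" where
  "wave_solution \<phi> v \<longleftrightarrow>
     Ck_on 2 UNIV (\<lambda>p. v (fst p) (snd p)) \<and>
     (\<forall>x r. deriv (\<lambda>\<rho>. deriv (\<lambda>\<sigma>. v x \<sigma>) \<rho>) r - laplacian (\<lambda>y. v y r) x = 0) \<and>
     (\<forall>x. v x 0 = \<phi> x) \<and>
     (\<forall>x. deriv (\<lambda>r. v x r) 0 = 0)"

end

theory Submission
  imports Defs
begin

(* Write V(x,r) = v x r for the wave solution.  For t > 0,
     psi(x,t) = J V (x,t),   J g (x,t) = \<integral>_0^1 c(t,s) g(x, 3 t^(1/3) s) ds,
   is an average of V(x,.) over the time window [0, 3 t^(1/3)] with weight c = 3/2 (1 - s^2).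
   (1) Differentiation under the integral sign (Leibniz rule): for C^1 (resp. C^2) g and a
       C^1 weight c, J c g is C^1 (resp. C^2) on R^n x (0,oo); x-derivatives commute with J,
       and the t-derivative is a sum of two averages with new weights.
   (2) Hence psi_t, psi_tt and \<Delta>psi are averages of V_r, V_rr and \<Delta>V.  With the wave
       equation \<Delta>V = V_rr, psi_tt - t^(-4/3) \<Delta>psi + 2/t psi_t equals -t^(-5/3)/2 times
       \<integral>_0^1 d/ds [(1-s^2)^2 V_r(x, 3 t^(1/3) s)] ds, which vanishes since (1-s^2)^2 = 0
       at s = 1 and V_r(x,0) = 0.
   (3) With u = t^(1/3), psi and t psi_t are averages continuous in u up to u = 0, and the
       weight has mass one; this gives the initial conditions. *)

section \<open>Directional derivatives and locality of \<open>C\<^sup>k\<close>\<close>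

lemma frechet_derivative_cong_open:
  assumes "open U" "x \<in> U" "\<And>y. y \<in> U \<Longrightarrow> f y = g y"
  shows "frechet_derivative f (at x) = frechet_derivative g (at x)"
    and "f differentiable at x \<longleftrightarrow> g differentiable at x"
proof -
  have "\<And>f'. (f has_derivative f') (at x) \<longleftrightarrow> (g has_derivative f') (at x)"
    using has_derivative_transform_within_open[OF _ assms(1,2)] assms(3) by metis
  then show "frechet_derivative f (at x) = frechet_derivative g (at x)"
    and "f differentiable at x \<longleftrightarrow> g differentiable at x"
    unfolding frechet_derivative_def differentiable_def by simp_all
qed

lemma Ck_on_cong:
  assumes "open U" "\<And>y. y \<in> U \<Longrightarrow> f y = g y"
  shows "Ck_on k U f = Ck_on k U g"
  using assms(2)
proof (induction k arbitrary: f g)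
  case 0
  then show ?case using continuous_on_cong[OF refl, of U f g] by simp
next
  case (Suc k)
  note local_eq = frechet_derivative_cong_open[OF assms(1) _ Suc.prems]
  have "Ck_on k U (\<lambda>x. frechet_derivative f (at x) b) = Ck_on k U (\<lambda>x. frechet_derivative g (at x) b)"
    for b by (rule Suc.IH) (simp add: local_eq(1))
  then show ?case
    using continuous_on_cong[OF refl, of U f g] Suc.prems local_eq(2) by simp
qed

definition Dd :: "('a::real_normed_vector \<Rightarrow> real) \<Rightarrow> 'a \<Rightarrow> 'a \<Rightarrow> real" where
  "Dd g b q = frechet_derivative g (at q) b"

lemma Dd_bounded_linear:
  assumes "g differentiable at q"
  shows "bounded_linear (\<lambda>h. Dd g h q)"
  using assms unfolding Dd_def
  by (simp add: frechet_derivative_works has_derivative_bounded_linear)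

lemma Dd_scaleR:
  assumes "g differentiable at q"
  shows "Dd g (r *\<^sub>R h) q = r * Dd g h q"
  using linear_scale[OF bounded_linear.linear[OF Dd_bounded_linear[OF assms]]] by simp

lemma C1_D:
  assumes "Ck_on 1 UNIV g"
  shows "\<And>q. g differentiable at q" "continuous_on UNIV g"
    "\<And>b. b \<in> Basis \<Longrightarrow> continuous_on UNIV (Dd g b)"
  using assms by (auto simp: Dd_def[abs_def])

lemma C2_D:
  assumes "Ck_on 2 UNIV g"
  shows "Ck_on 1 UNIV g" "\<And>b. b \<in> Basis \<Longrightarrow> Ck_on 1 UNIV (Dd g b)"
  using assms by (auto simp: numeral_2_eq_2 Dd_def[abs_def])

lemma has_real_derivative_along_line:
  assumes "G differentiable at (p + a *\<^sub>R d)"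
  shows "((\<lambda>h. G (p + h *\<^sub>R d)) has_real_derivative Dd G d (p + a *\<^sub>R d)) (at a)"
proof -
  have "((\<lambda>h. p + h *\<^sub>R d) has_derivative (\<lambda>h. h *\<^sub>R d)) (at a)"
    by (auto intro!: derivative_eq_intros)
  from has_derivative_compose[OF this assms[unfolded frechet_derivative_works]]
  show ?thesis unfolding has_field_derivative_def
    by (rule has_derivative_eq_rhs) (auto simp: Dd_scaleR[OF assms] Dd_def[symmetric] mult.commute)
qed

lemma deriv_in_time:
  fixes G :: "'a::real_normed_vector \<times> real \<Rightarrow> real"
  assumes "G differentiable at (x, \<tau>)"
  shows "((\<lambda>\<sigma>. G (x, \<sigma>)) has_real_derivative Dd G (0,1) (x, \<tau>)) (at \<tau>)"
    and "deriv (\<lambda>\<sigma>. G (x, \<sigma>)) \<tau> = Dd G (0,1) (x, \<tau>)"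
proof -
  show *: "((\<lambda>\<sigma>. G (x, \<sigma>)) has_real_derivative Dd G (0,1) (x, \<tau>)) (at \<tau>)"
    using has_real_derivative_along_line[of G "(x,0)" \<tau> "(0,1)"] assms by simp
  show "deriv (\<lambda>\<sigma>. G (x, \<sigma>)) \<tau> = Dd G (0,1) (x, \<tau>)"
    by (rule DERIV_imp_deriv[OF *])
qed

lemma deriv_in_space:
  fixes G :: "'a::real_normed_vector \<times> real \<Rightarrow> real"
  assumes "G differentiable at (y, r)"
  shows "deriv (\<lambda>h. G (y + h *\<^sub>R e, r)) 0 = Dd G (e,0) (y, r)"
  using has_real_derivative_along_line[of G "(y,r)" 0 "(e,0)"] assms by (simp add: DERIV_imp_deriv)

lemma deriv_cong_pos:
  assumes "(f has_real_derivative D) (at \<tau>)" "\<tau> > 0" "\<And>\<sigma>. \<sigma> > 0 \<Longrightarrow> f \<sigma> = g \<sigma>"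
  shows "deriv g \<tau> = D"
proof -
  have "(g has_real_derivative D) (at \<tau>)"
    by (rule has_field_derivative_transform_within_open[OF assms(1), of "{0<..}"]) (use assms in auto)
  then show ?thesis by (rule DERIV_imp_deriv)
qed

section \<open>The averaging operator\<close>

definition window :: "real \<Rightarrow> 'a \<times> real \<Rightarrow> 'a \<times> real" where
  "window s p = (fst p, 3 * snd p powr (1/3) * s)"

definition J :: "(real \<Rightarrow> real \<Rightarrow> real) \<Rightarrow> ('a \<times> real \<Rightarrow> real) \<Rightarrow> 'a \<times> real \<Rightarrow> real" where
  "J c g p = integral {0..1} (\<lambda>s. c (snd p) s * g (window s p))"

definition weight :: "(real \<Rightarrow> real \<Rightarrow> real) \<Rightarrow> (real \<Rightarrow> real \<Rightarrow> real) \<Rightarrow> bool" where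
  "weight c ct \<longleftrightarrow> continuous_on ({0<..} \<times> {0..1}) (\<lambda>(t,s). c t s) \<and>
     continuous_on ({0<..} \<times> {0..1}) (\<lambda>(t,s). ct t s) \<and>
     (\<forall>t s. t > 0 \<longrightarrow> ((\<lambda>t. c t s) has_real_derivative ct t s) (at t))"

text \<open>Differentiating the window in \<open>t\<close> multiplies the weight by \<open>s t\<^sup>-\<^sup>2\<^sup>/\<^sup>3\<close>; this is the new weight.\<close>

definition chain_weight :: "(real \<Rightarrow> real \<Rightarrow> real) \<Rightarrow> real \<Rightarrow> real \<Rightarrow> real" where
  "chain_weight c t s = c t s * s * t powr (-2/3)"

lemma chain_weight_continuous:
  assumes "continuous_on ({0<..} \<times> {0..1}) (\<lambda>(t,s). c t s)"
  shows "continuous_on ({0<..} \<times> {0..1}) (\<lambda>(t,s). chain_weight c t s)"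
proof -
  have "continuous_on ({0<..} \<times> {0..1::real}) (\<lambda>x. (\<lambda>(t,s). c t s) x * snd x * fst x powr (-2/3))"
    by (intro continuous_intros assms continuous_on_powr) auto
  then show ?thesis by (simp add: split_beta' chain_weight_def)
qed

lemma window_continuous: "continuous_on ((UNIV \<times> {0<..}) \<times> {0..1}) (\<lambda>x. window (snd x) (fst x))"
  unfolding window_def by (intro continuous_intros continuous_on_powr) auto

lemma window_has_derivative:
  assumes "snd p > 0"
  shows "((\<lambda>p. window s p) has_derivative (\<lambda>h. (fst h, s * snd p powr (-2/3) * snd h))) (at p)"
proof -
  have "snd p powr (-2/3) = snd p powr (1/3 - 1)" by simp
  also have "\<dots> = snd p powr (1/3) / snd p powr 1" by (rule powr_diff)
  also have "\<dots> = snd p powr (1/3) / snd p" using assms by simp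
  finally have e: "snd p powr (-2/3) = snd p powr (1/3) / snd p" .
  show ?thesis
    unfolding window_def
    by (rule has_derivative_eq_rhs, use assms in \<open>auto intro!: derivative_eq_intros\<close>)
      (use e in \<open>auto simp: fun_eq_iff\<close>)
qed

lemma integrand_continuous:
  fixes g :: "'a::real_normed_vector \<times> real \<Rightarrow> real" and c :: "real \<Rightarrow> real \<Rightarrow> real"
  assumes g: "continuous_on UNIV g"
    and c: "continuous_on ({0<..} \<times> {0..1}) (\<lambda>(t,s). c t s)"
  shows "continuous_on ((UNIV \<times> {0<..}) \<times> {0..1})
           (\<lambda>x. c (snd (fst x)) (snd x) * g (window (snd x) (fst x)))"
proof -
  have "(\<lambda>x::('a \<times> real) \<times> real. (snd (fst x), snd x)) ` ((UNIV \<times> {0<..}) \<times> {0..1})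
      \<subseteq> {0<..} \<times> {0..1}"
    by auto
  from continuous_on_compose2[OF c _ this]
  have "continuous_on ((UNIV \<times> {0<..}) \<times> {0..1})
      (\<lambda>x::('a \<times> real) \<times> real. c (snd (fst x)) (snd x))"
    by (simp add: continuous_on_Pair continuous_on_snd continuous_on_fst continuous_on_id)
  moreover have "continuous_on ((UNIV \<times> {0<..}) \<times> {0..1}) (\<lambda>x. g (window (snd x) (fst x)))"
    by (rule continuous_on_compose2[OF g window_continuous]) auto
  ultimately show ?thesis by (rule continuous_on_mult)
qed

lemma integrand_integrable:
  fixes g :: "'a::real_normed_vector \<times> real \<Rightarrow> real" and c :: "real \<Rightarrow> real \<Rightarrow> real"
  assumes "continuous_on UNIV g" "continuous_on ({0<..} \<times> {0..1}) (\<lambda>(t,s). c t s)" "snd p > 0"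
  shows "(\<lambda>s. c (snd p) s * g (window s p)) integrable_on {0..1}"
proof -
  have "continuous_on {0..1} (\<lambda>s. c (snd (fst (p,s))) (snd (p,s)) * g (window (snd (p,s)) (fst (p,s))))"
    using assms(3) by (intro continuous_on_compose2[OF integrand_continuous[OF assms(1,2)], of _ "\<lambda>s. (p,s)"])
      (auto intro!: continuous_intros simp: mem_Times_iff)
  then show ?thesis by (simp add: integrable_continuous_interval)
qed

lemma J_has_integral:
  fixes g :: "'a::real_normed_vector \<times> real \<Rightarrow> real" and c :: "real \<Rightarrow> real \<Rightarrow> real"
  assumes "continuous_on UNIV g" "continuous_on ({0<..} \<times> {0..1}) (\<lambda>(t,s). c t s)" "snd p > 0"
  shows "((\<lambda>s. c (snd p) s * g (window s p)) has_integral J c g p) {0..1}"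
  unfolding J_def using integrand_integrable[OF assms] by blast

lemma J_continuous:
  fixes g :: "'a::real_normed_vector \<times> real \<Rightarrow> real" and c :: "real \<Rightarrow> real \<Rightarrow> real"
  assumes "continuous_on UNIV g" "continuous_on ({0<..} \<times> {0..1}) (\<lambda>(t,s). c t s)"
  shows "continuous_on (UNIV \<times> {0<..}) (J c g)"
proof -
  have "continuous_on ((UNIV \<times> {0<..}) \<times> cbox 0 1) (\<lambda>(p, s). c (snd p) s * g (window s p))"
    using integrand_continuous[OF assms] by (simp add: split_beta' cbox_interval)
  from integral_continuous_on_param[OF this] show ?thesis
    unfolding J_def by (simp add: cbox_interval)
qed

definition integrand_deriv ::
    "(real \<Rightarrow> real \<Rightarrow> real) \<Rightarrow> (real \<Rightarrow> real \<Rightarrow> real) \<Rightarrow> ('a::real_normed_vector \<times> real \<Rightarrow> real)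
      \<Rightarrow> 'a \<times> real \<Rightarrow> real \<Rightarrow> 'a \<times> real \<Rightarrow> real" where
  "integrand_deriv c ct g p s h =
     ct (snd p) s * snd h * g (window s p)
     + c (snd p) s * Dd g (fst h, s * snd p powr (-2/3) * snd h) (window s p)"

lemma integrand_deriv_space: "integrand_deriv c ct g p s (e,0) = c (snd p) s * Dd g (e,0) (window s p)"
  by (simp add: integrand_deriv_def)

lemma integrand_deriv_time:
  assumes "\<And>q. g differentiable at q"
  shows "integrand_deriv c ct g p s (0,1) =
    ct (snd p) s * g (window s p) + chain_weight c (snd p) s * Dd g (0,1) (window s p)"
proof -
  have "Dd g (0, s * snd p powr (-2/3)) (window s p) = s * snd p powr (-2/3) * Dd g (0,1) (window s p)"
    using Dd_scaleR[OF assms, of "s * snd p powr (-2/3)" "(0,1)"] by simp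
  then show ?thesis by (simp add: integrand_deriv_def chain_weight_def)
qed

lemma integrand_deriv_bounded_linear:
  assumes "\<And>q. g differentiable at q"
  shows "bounded_linear (integrand_deriv c ct g p s)"
proof -
  have "bounded_linear (\<lambda>h. (fst h, s * snd p powr (-2/3) * snd h))"
    by (auto intro!: bounded_linear_intros)
  from bounded_linear_compose[OF Dd_bounded_linear[OF assms, of "window s p"] this]
  show ?thesis unfolding integrand_deriv_def
    by (auto intro!: bounded_linear_intros)
qed

lemma integrand_has_derivative:
  fixes g :: "'a::real_normed_vector \<times> real \<Rightarrow> real" and c :: "real \<Rightarrow> real \<Rightarrow> real"
  assumes g: "\<And>q. g differentiable at q" and c: "weight c ct" and t: "snd p > 0"
  shows "((\<lambda>p. c (snd p) s * g (window s p)) has_derivative integrand_deriv c ct g p s) (at p)"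
proof -
  have "((\<lambda>t. c t s) has_derivative (\<lambda>h. ct (snd p) s * h)) (at (snd p))"
    using c t by (simp add: weight_def has_field_derivative_def)
  from has_derivative_compose[OF has_derivative_snd[OF has_derivative_ident] this]
  have c': "((\<lambda>p. c (snd p) s) has_derivative (\<lambda>h. ct (snd p) s * snd h)) (at p)" by simp
  have g': "((\<lambda>p. g (window s p)) has_derivative
      (\<lambda>h. Dd g (fst h, s * snd p powr (-2/3) * snd h) (window s p))) (at p)"
    using has_derivative_compose[OF window_has_derivative[OF t] g[unfolded frechet_derivative_works]]
    by (simp add: Dd_def)
  show ?thesis
    using has_derivative_mult[OF c' g'] unfolding integrand_deriv_def
    by (rule has_derivative_eq_rhs) (auto simp: fun_eq_iff algebra_simps)
qed

lemma integrand_deriv_continuous: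
  fixes g :: "'a::euclidean_space \<times> real \<Rightarrow> real"
  assumes g: "Ck_on 1 UNIV g" and c: "weight c ct"
  shows "continuous_on ((UNIV \<times> {0<..}) \<times> cbox 0 1) (\<lambda>(p, s). Blinfun (integrand_deriv c ct g p s))"
proof (rule continuous_on_blinfun_componentwise)
  note gD = C1_D[OF g] and cD = c[unfolded weight_def]
  fix b :: "'a \<times> real" assume b: "b \<in> Basis"
  have "continuous_on ((UNIV \<times> {0<..}) \<times> {0..1}) (\<lambda>x. integrand_deriv c ct g (fst x) (snd x) b)"
  proof -
    from b consider e where "e \<in> Basis" "b = (e, 0)" | "b = (0, 1)"
      by (auto simp: Basis_prod_def)
    then show ?thesis
    proof cases
      case 1
      then show ?thesis
        using integrand_continuous[OF gD(3) cD[THEN conjunct1]] b by (simp add: integrand_deriv_space)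
    next
      case 2
      then have "(0, 1) \<in> (Basis :: ('a \<times> real) set)" using b by simp
      then have "continuous_on ((UNIV \<times> {0<..}) \<times> {0..1})
          (\<lambda>x. ct (snd (fst x)) (snd x) * g (window (snd x) (fst x))
             + chain_weight c (snd (fst x)) (snd x) * Dd g (0,1) (window (snd x) (fst x)))"
        by (intro continuous_on_add integrand_continuous gD(2,3)
              chain_weight_continuous cD[THEN conjunct1] cD[THEN conjunct2, THEN conjunct1])
      then show ?thesis using 2 by (simp add: integrand_deriv_time[OF gD(1)])
    qed
  qed
  moreover have "blinfun_apply (case x of (p, s) \<Rightarrow> Blinfun (integrand_deriv c ct g p s)) b
      = integrand_deriv c ct g (fst x) (snd x) b" for x
    by (simp add: split_beta bounded_linear_Blinfun_apply[OF integrand_deriv_bounded_linear[OF gD(1)]])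
  ultimately show "continuous_on ((UNIV \<times> {0<..}) \<times> cbox 0 1)
      (\<lambda>x. blinfun_apply (case x of (p, s) \<Rightarrow> Blinfun (integrand_deriv c ct g p s)) b)"
    by (simp add: cbox_interval)
qed

lemma J_has_derivative:
  fixes g :: "'a::euclidean_space \<times> real \<Rightarrow> real"
  assumes g: "Ck_on 1 UNIV g" and c: "weight c ct" and p: "snd p > 0"
  shows "(J c g has_derivative (\<lambda>h. integral {0..1} (\<lambda>s. integrand_deriv c ct g p s h))) (at p)"
proof -
  note gD = C1_D[OF g] and cD = c[unfolded weight_def]
  define U :: "('a \<times> real) set" where "U = UNIV \<times> {0<..}"
  have U: "open U" "convex U" "p \<in> U" using p
    by (simp_all add: U_def open_Times convex_Times convex_real_interval mem_Times_iff)
  note bl = integrand_deriv_bounded_linear[OF gD(1)]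
  note deriv_cont = integrand_deriv_continuous[OF g c, folded U_def]
  have leibniz: "((\<lambda>q. integral (cbox 0 1) (\<lambda>s. c (snd q) s * g (window s q))) has_derivative
      blinfun_apply (integral (cbox 0 1) (\<lambda>s. Blinfun (integrand_deriv c ct g p s)))) (at p within U)"
  proof (rule leibniz_rule[where f="\<lambda>q s. c (snd q) s * g (window s q)"
        and fx="\<lambda>q s. Blinfun (integrand_deriv c ct g q s)"])
    fix q s assume "q \<in> U"
    then show "((\<lambda>q. c (snd q) s * g (window s q)) has_derivative
        blinfun_apply (Blinfun (integrand_deriv c ct g q s))) (at q within U)"
      unfolding bounded_linear_Blinfun_apply[OF bl]
      by (intro has_derivative_at_withinI[OF integrand_has_derivative[OF gD(1) c]]) (simp add: U_def mem_Times_iff)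
  next
    fix q assume "q \<in> U"
    then show "(\<lambda>s. c (snd q) s * g (window s q)) integrable_on cbox 0 1"
      using integrand_integrable[OF gD(2) cD[THEN conjunct1]] by (simp add: U_def mem_Times_iff cbox_interval)
  qed (use deriv_cont U in auto)
  have "(\<lambda>s. Blinfun (integrand_deriv c ct g p s)) integrable_on cbox 0 1"
  proof (rule integrable_continuous)
    have sub: "(\<lambda>s. (p, s)) ` cbox 0 1 \<subseteq> U \<times> cbox 0 1" using U(3) by auto
    have "continuous_on (cbox 0 1) (\<lambda>s::real. (p, s))" by (intro continuous_intros)
    then have "continuous_on (cbox 0 1)
        ((\<lambda>(q, s). Blinfun (integrand_deriv c ct g q s)) \<circ> (\<lambda>s. (p, s)))"
      by (rule continuous_on_compose[OF _ continuous_on_subset[OF deriv_cont sub]])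
    then show "continuous_on (cbox 0 1) (\<lambda>s. Blinfun (integrand_deriv c ct g p s))"
      unfolding o_def prod.case .
  qed
  from integral_linear[OF this blinfun.bounded_linear_left]
  have apply_integral: "blinfun_apply (integral (cbox 0 1) (\<lambda>s. Blinfun (integrand_deriv c ct g p s))) h
      = integral {0..1} (\<lambda>s. integrand_deriv c ct g p s h)" for h
    by (simp add: o_def bounded_linear_Blinfun_apply[OF bl] cbox_interval)
  show ?thesis
    using leibniz unfolding at_within_open[OF U(3) U(1)] J_def cbox_interval
    by (rule has_derivative_eq_rhs) (simp add: fun_eq_iff apply_integral[unfolded cbox_interval])
qed

lemma J_differentiable:
  fixes g :: "'a::euclidean_space \<times> real \<Rightarrow> real"
  assumes "Ck_on 1 UNIV g" "weight c ct" "snd p > 0"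
  shows "J c g differentiable at p"
  using J_has_derivative[OF assms] unfolding differentiable_def by blast

lemma J_partial_space:
  fixes g :: "'a::euclidean_space \<times> real \<Rightarrow> real"
  assumes "Ck_on 1 UNIV g" "weight c ct" "snd p > 0"
  shows "Dd (J c g) (e,0) p = J c (Dd g (e,0)) p"
  unfolding Dd_def[of "J c g"] frechet_derivative_at[OF J_has_derivative[OF assms], symmetric]
  by (simp add: J_def integrand_deriv_space)

lemma J_partial_time:
  fixes g :: "'a::euclidean_space \<times> real \<Rightarrow> real" and c ct :: "real \<Rightarrow> real \<Rightarrow> real"
  assumes g: "Ck_on 1 UNIV g" and c: "weight c ct" and p: "snd p > 0"
  shows "Dd (J c g) (0,1) p = J ct g p + J (chain_weight c) (Dd g (0,1)) p"
proof -
  note gD = C1_D[OF g] and cD = c[unfolded weight_def]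
  have "(0, 1) \<in> (Basis :: ('a \<times> real) set)" by (simp add: Basis_prod_def)
  have "Dd (J c g) (0,1) p = integral {0..1} (\<lambda>s. ct (snd p) s * g (window s p)
      + chain_weight c (snd p) s * Dd g (0,1) (window s p))"
    unfolding Dd_def[of "J c g"] frechet_derivative_at[OF J_has_derivative[OF g c p], symmetric]
    by (simp add: integrand_deriv_time[OF gD(1)])
  also have "\<dots> = J ct g p + J (chain_weight c) (Dd g (0,1)) p"
    unfolding J_def
    by (intro integral_add integrand_integrable p gD(2) gD(3)[OF \<open>(0, 1) \<in> Basis\<close>]
        chain_weight_continuous cD[THEN conjunct1] cD[THEN conjunct2, THEN conjunct1])
  finally show ?thesis .
qed

lemma J_zero_weight: "J (\<lambda>t s. 0) g p = 0"
  by (simp add: J_def)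

lemma Basis_prod_cases:
  assumes "b \<in> (Basis :: ('a::euclidean_space \<times> real) set)"
  obtains e where "e \<in> Basis" "b = (e, 0)" | "b = (0, 1)"
  using assms by (auto simp: Basis_prod_def)

lemma J_C1:
  fixes g :: "'a::euclidean_space \<times> real \<Rightarrow> real"
  assumes g: "Ck_on 1 UNIV g" and c: "weight c ct"
  shows "Ck_on 1 (UNIV \<times> {0<..}) (J c g)"
proof -
  note gD = C1_D[OF g] and cD = c[unfolded weight_def]
  have "continuous_on (UNIV \<times> {0<..}) (Dd (J c g) b)" if b: "b \<in> Basis" for b
    using b
  proof (cases rule: Basis_prod_cases)
    case (1 e)
    have "continuous_on (UNIV \<times> {0<..}) (J c (Dd g (e,0)))"
      using J_continuous[OF gD(3) cD[THEN conjunct1]] b 1 by simp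
    then show ?thesis
      by (rule continuous_on_cong[THEN iffD1, rotated 2])
        (use J_partial_space[OF g c] 1 in \<open>auto simp: mem_Times_iff\<close>)
  next
    case 2
    have "continuous_on (UNIV \<times> {0<..}) (\<lambda>p. J ct g p + J (chain_weight c) (Dd g (0,1)) p)"
      using b 2 by (intro continuous_on_add J_continuous gD(2,3) chain_weight_continuous
          cD[THEN conjunct1] cD[THEN conjunct2, THEN conjunct1]) simp_all
    then show ?thesis
      by (rule continuous_on_cong[THEN iffD1, rotated 2])
        (use J_partial_time[OF g c] 2 in \<open>auto simp: mem_Times_iff\<close>)
  qed
  then show ?thesis
    using J_continuous[OF gD(2) cD[THEN conjunct1]] J_differentiable[OF g c]
    by (auto simp: mem_Times_iff Dd_def[abs_def])
qed

text \<open>\<open>J\<close> preserves \<open>C\<^sup>2\<close> regularity for weights independent of \<open>t\<close>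
  (so that the first time derivative is again a single average).\<close>

lemma J_C2:
  fixes g :: "'a::euclidean_space \<times> real \<Rightarrow> real"
  assumes g: "Ck_on 2 UNIV g" and c: "weight c (\<lambda>t s. 0)" and c1: "weight (chain_weight c) c1t"
  shows "Ck_on 2 (UNIV \<times> {0<..}) (J c g)"
proof -
  have U: "open (UNIV \<times> {0<..} :: ('a \<times> real) set)" by (simp add: open_Times)
  note g1 = C2_D(1)[OF g]
  have "Ck_on 1 (UNIV \<times> {0<..}) (Dd (J c g) b)" if b: "b \<in> Basis" for b
    using b
  proof (cases rule: Basis_prod_cases)
    case (1 e)
    have "Ck_on 1 (UNIV \<times> {0<..}) (J c (Dd g (e,0)))"
      using J_C1[OF C2_D(2)[OF g] c] b 1 by simp
    then show ?thesis
      by (subst Ck_on_cong[OF U]) (use J_partial_space[OF g1 c] 1 in \<open>auto simp: mem_Times_iff\<close>)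
  next
    case 2
    have "Ck_on 1 (UNIV \<times> {0<..}) (J (chain_weight c) (Dd g (0,1)))"
      using J_C1[OF C2_D(2)[OF g] c1] b 2 by simp
    then show ?thesis
      by (subst Ck_on_cong[OF U])
        (use J_partial_time[OF g1 c] 2 in \<open>auto simp: mem_Times_iff J_zero_weight\<close>)
  qed
  then show ?thesis
    using J_C1[OF g1 c] by (simp add: numeral_2_eq_2 Dd_def[abs_def])
qed

section \<open>The weight of the mean value formula\<close>

definition mean_weight :: "real \<Rightarrow> real \<Rightarrow> real" where
  "mean_weight t s = 3/2 * (1 - s\<^sup>2)"

definition mean_weight_dt :: "real \<Rightarrow> real \<Rightarrow> real" where
  "mean_weight_dt t s = 3/2 * (1 - s\<^sup>2) * s * (-2/3 * t powr (-5/3))"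

lemma weight_mean_weight: "weight mean_weight (\<lambda>t s. 0)"
  unfolding weight_def mean_weight_def
  by (auto intro!: continuous_intros simp: case_prod_beta)

lemma weight_chain_mean_weight: "weight (chain_weight mean_weight) mean_weight_dt"
  unfolding weight_def
proof (intro conjI allI impI)
  show "continuous_on ({0<..} \<times> {0..1}) (\<lambda>(t, s). chain_weight mean_weight t s)"
    using weight_mean_weight by (simp add: weight_def chain_weight_continuous)
  show "continuous_on ({0<..} \<times> {0..1}) (\<lambda>(t, s). mean_weight_dt t s)"
    unfolding case_prod_beta mean_weight_dt_def by (intro continuous_intros continuous_on_powr) auto
  fix t s :: real assume t: "0 < t"
  have "((\<lambda>t. t powr (-2/3)) has_real_derivative (-2/3) * t powr (-2/3 - 1)) (at t)"
    using t by (auto intro!: derivative_eq_intros)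
  then have "((\<lambda>t. t powr (-2/3)) has_real_derivative (-2/3) * t powr (-5/3)) (at t)" by simp
  then show "((\<lambda>t. chain_weight mean_weight t s) has_real_derivative mean_weight_dt t s) (at t)"
    unfolding chain_weight_def mean_weight_def mean_weight_dt_def by (rule DERIV_cmult)
qed

lemma mean_weight_integral: "((\<lambda>s. mean_weight t s) has_integral 1) {0..1}"
proof -
  have "((\<lambda>s. mean_weight t s) has_integral
      ((\<lambda>s. 3/2 * (s - s^3/3)) 1 - (\<lambda>s. 3/2 * (s - s^3/3)) 0)) {0..1}"
    by (rule fundamental_theorem_of_calculus)
      (auto intro!: derivative_eq_intros simp: mean_weight_def
        has_real_derivative_iff_has_vector_derivative[symmetric] power2_eq_square)
  then show ?thesis by simp
qed

text \<open>The pointwise identity behind the equation for \<open>\<psi>\<close>: with \<open>\<alpha> = V\<^sub>r\<close> and \<open>\<beta> = V\<^sub>r\<^sub>r\<close> at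
  \<open>(x, 3 t\<^sup>1\<^sup>/\<^sup>3 s)\<close>, the integrand of \<open>\<psi>\<^sub>t\<^sub>t - t\<^sup>-\<^sup>4\<^sup>/\<^sup>3 \<Delta>\<psi> + 2/t \<psi>\<^sub>t\<close> is a multiple of
  \<open>d/ds [(1-s\<^sup>2)\<^sup>2 V\<^sub>r(x, 3 t\<^sup>1\<^sup>/\<^sup>3 s)]\<close>.\<close>

lemma mean_weight_identity:
  fixes t s \<alpha> \<beta> :: real
  assumes t: "t > 0"
  shows "mean_weight_dt t s * \<alpha> + chain_weight (chain_weight mean_weight) t s * \<beta>
     - t powr (-4/3) * (mean_weight t s * \<beta>) + 2/t * (chain_weight mean_weight t s * \<alpha>)
   = -(1/2) * t powr (-5/3) * (-4 * s * (1-s\<^sup>2) * \<alpha> + (1-s\<^sup>2)\<^sup>2 * (3 * t powr (1/3) * \<beta>))"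
proof -
  define a where "a = t powr (-2/3)"
  have 1: "t powr (-4/3) = a * a" unfolding a_def by (simp add: powr_add[symmetric])
  have "a = t powr (-5/3 + 1)" unfolding a_def by simp
  also have "\<dots> = t powr (-5/3) * t" using t by (simp only: powr_add) simp
  finally have 2: "t powr (-5/3) = a / t" using t by (simp add: field_simps)
  have "t powr (1/3) = t powr (-2/3 + 1)" by simp
  also have "\<dots> = a * t" unfolding a_def using t by (simp only: powr_add) simp
  finally have 3: "t powr (1/3) = a * t" .
  show ?thesis
    unfolding chain_weight_def mean_weight_def mean_weight_dt_def 1 2 3 a_def[symmetric] using t
    by (simp add: field_simps power2_eq_square)
qed

section \<open>The mean value \<open>\<psi>\<close> of a function of space and time\<close>

lemma mean_C2:
  fixes V :: "'a::euclidean_space \<times> real \<Rightarrow> real"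
  assumes V: "Ck_on 2 UNIV V" and psi: "\<And>x t. t > 0 \<Longrightarrow> \<psi> x t = J mean_weight V (x,t)"
  shows "Ck_on 2 (UNIV \<times> {0<..}) (\<lambda>p. \<psi> (fst p) (snd p))"
proof -
  have U: "open (UNIV \<times> {0<..} :: ('a \<times> real) set)" by (simp add: open_Times)
  have "Ck_on 2 (UNIV \<times> {0<..}) (J mean_weight V)"
    by (rule J_C2[OF V weight_mean_weight weight_chain_mean_weight])
  then show ?thesis
    by (subst Ck_on_cong[OF U]) (auto simp: psi mem_Times_iff)
qed

lemma mean_dt:
  fixes V :: "'a::euclidean_space \<times> real \<Rightarrow> real"
  assumes V: "Ck_on 1 UNIV V" and psi: "\<And>x t. t > 0 \<Longrightarrow> \<psi> x t = J mean_weight V (x,t)"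
    and \<tau>: "\<tau> > 0"
  shows "deriv (\<lambda>\<sigma>. \<psi> x \<sigma>) \<tau> = J (chain_weight mean_weight) (Dd V (0,1)) (x, \<tau>)"
proof (rule deriv_cong_pos[OF _ \<tau>])
  show "((\<lambda>\<sigma>. J mean_weight V (x, \<sigma>)) has_real_derivative
      J (chain_weight mean_weight) (Dd V (0,1)) (x, \<tau>)) (at \<tau>)"
    using deriv_in_time(1)[OF J_differentiable[OF V weight_mean_weight], of x \<tau>]
      J_partial_time[OF V weight_mean_weight, of "(x, \<tau>)"] \<tau>
    by (simp add: J_zero_weight)
qed (simp add: psi)

lemma mean_dtt:
  fixes V :: "'a::euclidean_space \<times> real \<Rightarrow> real"
  assumes V: "Ck_on 2 UNIV V" and psi: "\<And>x t. t > 0 \<Longrightarrow> \<psi> x t = J mean_weight V (x,t)"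
    and t: "t > 0"
  shows "deriv (\<lambda>\<tau>. deriv (\<lambda>\<sigma>. \<psi> x \<sigma>) \<tau>) t =
    J mean_weight_dt (Dd V (0,1)) (x, t) + J (chain_weight (chain_weight mean_weight)) (Dd (Dd V (0,1)) (0,1)) (x, t)"
proof (rule deriv_cong_pos[OF _ t])
  have Vr: "Ck_on 1 UNIV (Dd V (0,1))" using C2_D(2)[OF V] by (simp add: Basis_prod_def)
  show "((\<lambda>\<sigma>. J (chain_weight mean_weight) (Dd V (0,1)) (x, \<sigma>)) has_real_derivative
      J mean_weight_dt (Dd V (0,1)) (x, t) + J (chain_weight (chain_weight mean_weight)) (Dd (Dd V (0,1)) (0,1)) (x, t)) (at t)"
    using deriv_in_time(1)[OF J_differentiable[OF Vr weight_chain_mean_weight], of x t]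
      J_partial_time[OF Vr weight_chain_mean_weight, of "(x, t)"] t
    by simp
qed (simp add: mean_dt[OF C2_D(1)[OF V] psi])

lemma mean_laplacian:
  fixes V :: "(real^'n) \<times> real \<Rightarrow> real"
  assumes V: "Ck_on 2 UNIV V" and psi: "\<And>x t. t > 0 \<Longrightarrow> \<psi> x t = J mean_weight V (x,t)"
    and t: "t > 0"
  shows "laplacian (\<lambda>y. \<psi> y t) x =
    J mean_weight (\<lambda>q. \<Sum>i\<in>UNIV. Dd (Dd V (axis i 1, 0)) (axis i 1, 0) q) (x, t)"
proof -
  note V1 = C2_D(1)[OF V] and w = weight_mean_weight
  have basis: "(axis i 1 :: real^'n, 0::real) \<in> Basis" for i by (simp add: Basis_prod_def)
  have Ve: "Ck_on 1 UNIV (Dd V (axis i 1, 0))" for i using C2_D(2)[OF V basis] .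
  have first: "partial (\<lambda>y. \<psi> y t) (axis i 1) = (\<lambda>y. J mean_weight (Dd V (axis i 1, 0)) (y, t))" for i
  proof
    fix y
    have "partial (\<lambda>y. \<psi> y t) (axis i 1) y = deriv (\<lambda>h. J mean_weight V (y + h *\<^sub>R axis i 1, t)) 0"
      unfolding partial_def using t by (simp add: psi)
    also have "\<dots> = J mean_weight (Dd V (axis i 1, 0)) (y, t)"
      using deriv_in_space[OF J_differentiable[OF V1 w]] J_partial_space[OF V1 w] t by simp
    finally show "partial (\<lambda>y. \<psi> y t) (axis i 1) y = J mean_weight (Dd V (axis i 1, 0)) (y, t)" .
  qed
  have second: "partial (\<lambda>y. J mean_weight (Dd V (axis i 1, 0)) (y, t)) (axis i 1) x
      = J mean_weight (Dd (Dd V (axis i 1, 0)) (axis i 1, 0)) (x, t)" for i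
    unfolding partial_def
    using deriv_in_space[OF J_differentiable[OF Ve w]] J_partial_space[OF Ve w] t by simp
  have "laplacian (\<lambda>y. \<psi> y t) x = (\<Sum>i\<in>UNIV. J mean_weight (Dd (Dd V (axis i 1, 0)) (axis i 1, 0)) (x, t))"
    unfolding laplacian_def first second ..
  also have "\<dots> = integral {0..1} (\<lambda>s. \<Sum>i\<in>UNIV. mean_weight t s * Dd (Dd V (axis i 1, 0)) (axis i 1, 0) (window s (x, t)))"
    unfolding J_def snd_conv
    by (rule integral_sum[symmetric])
      (use integrand_integrable[OF C1_D(3)[OF Ve basis] w[unfolded weight_def, THEN conjunct1]] t in auto)
  also have "\<dots> = J mean_weight (\<lambda>q. \<Sum>i\<in>UNIV. Dd (Dd V (axis i 1, 0)) (axis i 1, 0) q) (x, t)"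
    unfolding J_def by (simp add: sum_distrib_left)
  finally show ?thesis .
qed

lemma wave_solution_Dd:
  assumes "wave_solution \<phi> v"
  defines "V \<equiv> \<lambda>p. v (fst p) (snd p)"
  shows "Dd (Dd V (0,1)) (0,1) q = (\<Sum>i\<in>UNIV. Dd (Dd V (axis i 1, 0)) (axis i 1, 0) q)"
proof -
  have V: "Ck_on 2 UNIV V" and wave: "\<And>x r. deriv (\<lambda>\<rho>. deriv (\<lambda>\<sigma>. v x \<sigma>) \<rho>) r - laplacian (\<lambda>y. v y r) x = 0"
    using assms unfolding wave_solution_def by simp_all
  have basis: "(axis i 1 :: real^'n, 0::real) \<in> Basis" "(0 :: real^'n, 1::real) \<in> Basis" for i
    by (simp_all add: Basis_prod_def)
  note Vd = C1_D(1)[OF C2_D(1)[OF V]]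
  note Vrd = C1_D(1)[OF C2_D(2)[OF V basis(2)]] and Ved = C1_D(1)[OF C2_D(2)[OF V basis(1)]]
  obtain y r where q: "q = (y, r)" by (cases q)
  have "deriv (\<lambda>\<sigma>. v y \<sigma>) \<rho> = Dd V (0,1) (y, \<rho>)" for \<rho>
    using deriv_in_time(2)[OF Vd, of y \<rho>] by (simp add: V_def)
  then have time: "deriv (\<lambda>\<rho>. deriv (\<lambda>\<sigma>. v y \<sigma>) \<rho>) r = Dd (Dd V (0,1)) (0,1) (y, r)"
    using deriv_in_time(2)[OF Vrd, of y r] by simp
  have "partial (\<lambda>y. v y r) (axis i 1) = (\<lambda>y'. Dd V (axis i 1, 0) (y', r))" for i
    using deriv_in_space[OF Vd] by (simp add: fun_eq_iff partial_def V_def)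
  then have space: "laplacian (\<lambda>y. v y r) y = (\<Sum>i\<in>UNIV. Dd (Dd V (axis i 1, 0)) (axis i 1, 0) (y, r))"
    unfolding laplacian_def using deriv_in_space[OF Ved] by (simp add: partial_def)
  show ?thesis using wave[of y r] time space q by simp
qed

text \<open>Along the window, \<open>(1-s\<^sup>2)\<^sup>2 V\<^sub>r\<close> has the derivative appearing in \<open>mean_weight_identity\<close>.\<close>

lemma boundary_term_has_derivative:
  fixes V :: "'a::euclidean_space \<times> real \<Rightarrow> real"
  assumes V: "Ck_on 2 UNIV V"
  shows "((\<lambda>s. (1 - s\<^sup>2)\<^sup>2 * Dd V (0,1) (window s p)) has_real_derivative
      -4 * s * (1-s\<^sup>2) * Dd V (0,1) (window s p)
      + (1-s\<^sup>2)\<^sup>2 * (3 * snd p powr (1/3) * Dd (Dd V (0,1)) (0,1) (window s p))) (at s)"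
proof -
  define k where "k = 3 * snd p powr (1/3)"
  have Vrd: "Dd V (0,1) differentiable at q" for q
    using C1_D(1)[OF C2_D(2)[OF V]] by (simp add: Basis_prod_def)
  have window: "window s p = (fst p, 0) + s *\<^sub>R (0, k)" for s by (simp add: window_def k_def)
  have "Dd (Dd V (0,1)) (0, k) q = k * Dd (Dd V (0,1)) (0,1) q" for q
    using Dd_scaleR[OF Vrd, where r=k and h="(0,1)"] by simp
  with has_real_derivative_along_line[OF Vrd, where p="(fst p, 0)" and a=s and d="(0, k)"]
  have "((\<lambda>s. Dd V (0,1) (window s p)) has_real_derivative k * Dd (Dd V (0,1)) (0,1) (window s p)) (at s)"
    by (simp add: window)
  then show ?thesis unfolding k_def[symmetric]
    by (auto intro!: derivative_eq_intros simp: algebra_simps power2_eq_square)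
qed

text \<open>Hence the integral of that derivative over the window vanishes: at \<open>s = 1\<close> because of
  the factor \<open>(1-s\<^sup>2)\<^sup>2\<close>, at \<open>s = 0\<close> because \<open>V\<^sub>r(x,0) = 0\<close>.\<close>

lemma boundary_term_integral:
  fixes V :: "'a::euclidean_space \<times> real \<Rightarrow> real"
  assumes V: "Ck_on 2 UNIV V" and rest: "Dd V (0,1) (x, 0) = 0"
  shows "((\<lambda>s. -4 * s * (1-s\<^sup>2) * Dd V (0,1) (window s (x, t))
      + (1-s\<^sup>2)\<^sup>2 * (3 * t powr (1/3) * Dd (Dd V (0,1)) (0,1) (window s (x, t)))) has_integral 0) {0..1}"
proof -
  define h where "h = (\<lambda>s. (1 - s\<^sup>2)\<^sup>2 * Dd V (0,1) (window s (x, t)))"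
  have "h 1 = 0" "h 0 = 0" using rest by (simp_all add: h_def window_def)
  moreover have "((\<lambda>s. -4 * s * (1-s\<^sup>2) * Dd V (0,1) (window s (x, t))
      + (1-s\<^sup>2)\<^sup>2 * (3 * t powr (1/3) * Dd (Dd V (0,1)) (0,1) (window s (x, t)))) has_integral (h 1 - h 0)) {0..1}"
    using boundary_term_has_derivative[OF V, where p="(x, t)"] unfolding h_def snd_conv
    by (intro fundamental_theorem_of_calculus)
      (auto simp: has_real_derivative_iff_has_vector_derivative[symmetric] intro: has_field_derivative_at_within)
  ultimately show ?thesis by simp
qed

text \<open>The radial equation: the combination \<open>\<psi>\<^sub>t\<^sub>t - t\<^sup>-\<^sup>4\<^sup>/\<^sup>3 \<Delta>\<psi> + 2/t \<psi>\<^sub>t\<close>, written as averages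
  of \<open>V\<^sub>r\<close> and \<open>V\<^sub>r\<^sub>r\<close>, is by \<open>mean_weight_identity\<close> a multiple of the vanishing integral above.\<close>

lemma mean_radial_equation:
  fixes V :: "'a::euclidean_space \<times> real \<Rightarrow> real"
  assumes V: "Ck_on 2 UNIV V" and rest: "Dd V (0,1) (x, 0) = 0" and t: "t > 0"
  shows "J mean_weight_dt (Dd V (0,1)) (x, t) + J (chain_weight (chain_weight mean_weight)) (Dd (Dd V (0,1)) (0,1)) (x, t)
    - t powr (-4/3) * J mean_weight (Dd (Dd V (0,1)) (0,1)) (x, t)
    + 2/t * J (chain_weight mean_weight) (Dd V (0,1)) (x, t) = 0"
    (is "?lhs = 0")
proof -
  define p where "p = (x, t)"
  define Vr where "Vr = Dd V (0,1)"
  define Vrr where "Vrr = Dd Vr (0,1)"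
  have pt: "snd p > 0" using t by (simp add: p_def)
  have Vr1: "Ck_on 1 UNIV Vr" using C2_D(2)[OF V] by (simp add: Basis_prod_def Vr_def)
  have Vr_cont: "continuous_on UNIV Vr" and Vrr_cont: "continuous_on UNIV Vrr"
    using C1_D(2,3)[OF Vr1] by (simp_all add: Basis_prod_def Vrr_def)
  have w0: "continuous_on ({0<..} \<times> {0..1}) (\<lambda>(t,s). mean_weight t s)"
    and w1: "continuous_on ({0<..} \<times> {0..1}) (\<lambda>(t,s). chain_weight mean_weight t s)"
    and w1t: "continuous_on ({0<..} \<times> {0..1}) (\<lambda>(t,s). mean_weight_dt t s)"
    using weight_mean_weight weight_chain_mean_weight by (simp_all add: weight_def)
  note I1 = J_has_integral[OF Vr_cont w1t pt] and I2 = J_has_integral[OF Vrr_cont chain_weight_continuous[OF w1] pt]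
    and I3 = J_has_integral[OF Vrr_cont w0 pt] and I4 = J_has_integral[OF Vr_cont w1 pt]
  have "((\<lambda>s. mean_weight_dt (snd p) s * Vr (window s p)
        + chain_weight (chain_weight mean_weight) (snd p) s * Vrr (window s p)
        - t powr (-4/3) * (mean_weight (snd p) s * Vrr (window s p))
        + 2/t * (chain_weight mean_weight (snd p) s * Vr (window s p))) has_integral ?lhs) {0..1}"
    unfolding p_def[symmetric] Vr_def[symmetric] Vrr_def[symmetric]
    by (intro has_integral_add has_integral_diff has_integral_mult_right I1 I2 I3 I4)
  moreover have "((\<lambda>s. mean_weight_dt (snd p) s * Vr (window s p)
        + chain_weight (chain_weight mean_weight) (snd p) s * Vrr (window s p)
        - t powr (-4/3) * (mean_weight (snd p) s * Vrr (window s p))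
        + 2/t * (chain_weight mean_weight (snd p) s * Vr (window s p))) has_integral 0) {0..1}"
    using has_integral_mult_right[OF boundary_term_integral[OF V rest], of "-(1/2) * t powr (-5/3)"]
    unfolding p_def snd_conv Vrr_def Vr_def mean_weight_identity[OF t] by simp
  ultimately show ?thesis by (rule has_integral_unique)
qed

text \<open>The average of \<open>g(x,\<cdot>)\<close> over the window \<open>[0, 3u]\<close> with weight \<open>w\<close>, as a function of the
  window length \<open>u = t\<^sup>1\<^sup>/\<^sup>3\<close>; unlike \<open>J\<close> it makes sense and is continuous also at \<open>u = 0\<close>.\<close>

definition window_average :: "('a \<times> real \<Rightarrow> real) \<Rightarrow> (real \<Rightarrow> real) \<Rightarrow> 'a \<Rightarrow> real \<Rightarrow> real" where
  "window_average g w x u = integral {0..1} (\<lambda>s. w s * g (x, 3 * u * s))"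

lemma window_average_continuous:
  fixes g :: "'a::real_normed_vector \<times> real \<Rightarrow> real" and w :: "real \<Rightarrow> real"
  assumes g: "continuous_on UNIV g" and w: "continuous_on UNIV w"
  shows "continuous_on UNIV (window_average g w x)"
proof -
  have "continuous_on (UNIV \<times> cbox 0 1) (\<lambda>(u, s). w s * g (x, 3 * u * s))"
    unfolding case_prod_beta
    by (intro continuous_intros continuous_on_compose2[OF w] continuous_on_compose2[OF g]) auto
  from integral_continuous_on_param[OF this] show ?thesis
    by (simp add: cbox_interval window_average_def[abs_def])
qed

lemma window_average_at_zero:
  "window_average g (\<lambda>s. mean_weight 0 s) x 0 = g (x, 0)"
  using integral_unique[OF mean_weight_integral] by (simp add: window_average_def)

lemma cube_root_tendsto_zero: "((\<lambda>t::real. t powr (1/3)) \<longlongrightarrow> 0) (at_right 0)"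
proof -
  have "\<forall>\<^sub>F t in at_right 0. 0 \<le> (t::real)"
    using eventually_at_right_less[of "0::real"] by (rule eventually_mono) simp
  then have "((\<lambda>t::real. t powr (1/3)) \<longlongrightarrow> 0 powr (1/3)) (at_right 0)"
    by (intro tendsto_powr'[OF tendsto_ident_at tendsto_const]) simp_all
  then show ?thesis by simp
qed

lemma mean_as_window_average:
  assumes psi: "\<And>x t. t > 0 \<Longrightarrow> \<psi> x t = J mean_weight V (x,t)" and t: "t > 0"
  shows "\<psi> x t = window_average V (\<lambda>s. mean_weight 0 s) x (t powr (1/3))"
  using t by (simp add: psi J_def window_average_def mean_weight_def window_def mult.assoc)

lemma mean_dt_as_window_average:
  fixes V :: "'a::euclidean_space \<times> real \<Rightarrow> real"
  assumes V: "Ck_on 1 UNIV V" and psi: "\<And>x t. t > 0 \<Longrightarrow> \<psi> x t = J mean_weight V (x,t)"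
    and t: "t > 0"
  shows "t * deriv (\<lambda>\<sigma>. \<psi> x \<sigma>) t
    = t powr (1/3) * window_average (Dd V (0,1)) (\<lambda>s. mean_weight 0 s * s) x (t powr (1/3))"
proof -
  have "t powr (1/3) = t powr (1 + -2/3)" by simp
  also have "\<dots> = t * t powr (-2/3)" using t by (simp only: powr_add) simp
  finally have root: "t * t powr (-2/3) = t powr (1/3)" by simp
  have "(\<lambda>s. chain_weight mean_weight (snd (x, t)) s * Dd V (0,1) (window s (x, t)))
      = (\<lambda>s. t powr (-2/3) * (mean_weight 0 s * s * Dd V (0,1) (x, 3 * t powr (1/3) * s)))"
    by (auto simp: fun_eq_iff chain_weight_def mean_weight_def window_def mult_ac)
  then have "t * deriv (\<lambda>\<sigma>. \<psi> x \<sigma>) t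
      = t * (t powr (-2/3) * window_average (Dd V (0,1)) (\<lambda>s. mean_weight 0 s * s) x (t powr (1/3)))"
    using mean_dt[OF V psi t, of x] by (simp add: J_def window_average_def)
  also have "\<dots> = t powr (1/3) * window_average (Dd V (0,1)) (\<lambda>s. mean_weight 0 s * s) x (t powr (1/3))"
    using root by (simp add: mult.assoc[symmetric])
  finally show ?thesis .
qed

text \<open>Initial behaviour of \<open>\<psi>\<close>: the window averages are continuous up to \<open>u = 0\<close>, where the
  first one equals \<open>V(x,0)\<close> since the weight has mass one.\<close>

lemma mean_initial_limits:
  fixes V :: "'a::euclidean_space \<times> real \<Rightarrow> real"
  assumes V: "Ck_on 1 UNIV V" and psi: "\<And>x t. t > 0 \<Longrightarrow> \<psi> x t = J mean_weight V (x,t)"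
  shows "((\<lambda>t. t * \<psi> x t) \<longlongrightarrow> 0) (at_right 0)"
    and "((\<lambda>t. t * deriv (\<lambda>\<sigma>. \<psi> x \<sigma>) t + \<psi> x t) \<longlongrightarrow> V (x, 0)) (at_right 0)"
proof -
  define W0 where "W0 = window_average V (\<lambda>s. mean_weight 0 s) x"
  define W1 where "W1 = window_average (Dd V (0,1)) (\<lambda>s. mean_weight 0 s * s) x"
  have Vr_cont: "continuous_on UNIV (Dd V (0,1))" using C1_D(3)[OF V] by (simp add: Basis_prod_def)
  have W0_cont: "continuous_on UNIV W0" and W1_cont: "continuous_on UNIV W1"
    unfolding W0_def W1_def mean_weight_def
    by (intro window_average_continuous C1_D(2)[OF V] Vr_cont continuous_intros)+
  have W0_lim: "((\<lambda>t. W0 (t powr (1/3))) \<longlongrightarrow> V (x, 0)) (at_right 0)"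
    using continuous_on_tendsto_compose[OF W0_cont cube_root_tendsto_zero]
    by (simp add: W0_def window_average_at_zero)
  have W1_lim: "((\<lambda>t. W1 (t powr (1/3))) \<longlongrightarrow> W1 0) (at_right 0)"
    using continuous_on_tendsto_compose[OF W1_cont cube_root_tendsto_zero] by simp
  have psi_W0: "\<forall>\<^sub>F t in at_right 0. \<psi> x t = W0 (t powr (1/3))"
    and dpsi_W1: "\<forall>\<^sub>F t in at_right 0. t * deriv (\<lambda>\<sigma>. \<psi> x \<sigma>) t = t powr (1/3) * W1 (t powr (1/3))"
    using eventually_at_right_less[of "0::real"]
    by (auto elim!: eventually_mono simp: W0_def W1_def mean_as_window_average[OF psi]
        mean_dt_as_window_average[OF V psi])
  have lim0: "((\<lambda>t. t * W0 (t powr (1/3))) \<longlongrightarrow> 0 * V (x, 0)) (at_right 0)"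
    by (intro tendsto_mult tendsto_ident_at W0_lim)
  have "\<forall>\<^sub>F t in at_right 0. t * \<psi> x t = t * W0 (t powr (1/3))"
    using psi_W0 by (rule eventually_mono) simp
  from tendsto_cong[OF this] lim0 show "((\<lambda>t. t * \<psi> x t) \<longlongrightarrow> 0) (at_right 0)"
    by simp
  have lim1: "((\<lambda>t. t powr (1/3) * W1 (t powr (1/3)) + W0 (t powr (1/3))) \<longlongrightarrow> 0 * W1 0 + V (x, 0)) (at_right 0)"
    by (intro tendsto_add tendsto_mult cube_root_tendsto_zero W1_lim W0_lim)
  have "\<forall>\<^sub>F t in at_right 0. t * deriv (\<lambda>\<sigma>. \<psi> x \<sigma>) t + \<psi> x t
      = t powr (1/3) * W1 (t powr (1/3)) + W0 (t powr (1/3))"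
    using eventually_conj[OF psi_W0 dpsi_W1] by (rule eventually_mono) simp
  from tendsto_cong[OF this] lim1
  show "((\<lambda>t. t * deriv (\<lambda>\<sigma>. \<psi> x \<sigma>) t + \<psi> x t) \<longlongrightarrow> V (x, 0)) (at_right 0)"
    by simp
qed

text \<open>The hypotheses on \<open>\<phi>1\<close> (regularity and compact support) serve, in the paper, to
  guarantee the existence of the classical wave solution \<open>v\<close>; once \<open>v\<close> is given, the
  properties of \<open>\<psi>\<close> follow from \<open>wave_solution \<phi>1 v\<close> alone.\<close>

theorem corollary2p6:
  fixes \<phi>1 :: "real^'n \<Rightarrow> real" and v :: "real^'n \<Rightarrow> real \<Rightarrow> real"
    and \<psi> :: "real^'n \<Rightarrow> real \<Rightarrow> real"
  assumes phi_reg: "Ck_on (CARD('n) div 2 + 2) UNIV \<phi>1"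
    and phi_supp: "bounded {x. \<phi>1 x \<noteq> 0}"
    and v_sol: "wave_solution \<phi>1 v"
    and psi_def: "\<And>x t. t > 0 \<Longrightarrow>
       \<psi> x t = 3/2 * integral {0..1} (\<lambda>s. v x (3 * t powr (1/3) * s) * (1 - s^2))"
  shows "Ck_on 2 (UNIV \<times> {0<..}) (\<lambda>p. \<psi> (fst p) (snd p))
    \<and> (\<forall>x. \<forall>t>0. deriv (\<lambda>\<tau>. deriv (\<lambda>\<sigma>. \<psi> x \<sigma>) \<tau>) t
                 - t powr (-4/3) * laplacian (\<lambda>y. \<psi> y t) x
                 + 2 / t * deriv (\<lambda>\<sigma>. \<psi> x \<sigma>) t = 0)
    \<and> (\<forall>x. ((\<lambda>t. t * \<psi> x t) \<longlongrightarrow> 0) (at_right 0))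
    \<and> (\<forall>x. ((\<lambda>t. t * deriv (\<lambda>\<sigma>. \<psi> x \<sigma>) t + \<psi> x t) \<longlongrightarrow> \<phi>1 x) (at_right 0))"
proof -
  define V where "V = (\<lambda>p. v (fst p) (snd p))"
  have V: "Ck_on 2 UNIV V" and initial: "\<And>x. V (x, 0) = \<phi>1 x"
    using v_sol by (simp_all add: wave_solution_def V_def)
  have rest: "Dd V (0,1) (x, 0) = 0" for x
    using deriv_in_time(2)[OF C1_D(1)[OF C2_D(1)[OF V]], of x 0] v_sol
    by (simp add: wave_solution_def V_def)
  have psi: "\<psi> x t = J mean_weight V (x, t)" if "t > 0" for x t
  proof -
    have "(\<lambda>s. mean_weight t s * V (window s (x, t)))
        = (\<lambda>s. 3/2 * (v x (3 * t powr (1/3) * s) * (1 - s^2)))"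
      by (simp add: fun_eq_iff mean_weight_def V_def window_def)
    then show ?thesis by (simp add: J_def psi_def[OF that])
  qed
  have wave: "(\<lambda>q. \<Sum>i\<in>UNIV. Dd (Dd V (axis i 1, 0)) (axis i 1, 0) q) = Dd (Dd V (0,1)) (0,1)"
    using wave_solution_Dd[OF v_sol] by (simp add: V_def fun_eq_iff)
  have "deriv (\<lambda>\<tau>. deriv (\<lambda>\<sigma>. \<psi> x \<sigma>) \<tau>) t - t powr (-4/3) * laplacian (\<lambda>y. \<psi> y t) x
      + 2 / t * deriv (\<lambda>\<sigma>. \<psi> x \<sigma>) t = 0" if "t > 0" for x t
    using mean_radial_equation[OF V rest that]
    by (simp add: mean_dtt[OF V psi that] mean_laplacian[OF V psi that] wave
        mean_dt[OF C2_D(1)[OF V] psi that])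
  then show ?thesis
    using mean_C2[OF V psi] mean_initial_limits[OF C2_D(1)[OF V] psi] by (simp add: initial)
qed

end
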